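(* Let $X\sim p$ be a continuous random variable with a piecewise continuous density $p$ such that $H([X]_1)<\infty$, $\int_{\mathbb R}p(x)|\log p(x)|\,dx<\infty$ and $\operatorname{ess\,sup}_x p(x)=L<\infty$. Then for every real sequence $(c_m)_{m\ge1}$, $$\lim_{m\to\infty}\big(H([X+c_m]_m)-\log m\big)=h(X).$$
   Context: For $m>0$, $[x]_m=\frac1m\lfloor\frac12+mx\rfloor$; $H$ is discrete entropy and $h$ differential entropy (natural log). *)

theory Defs
  imports "HOL-Probability.Probability"
begin

definition quant :: "real \<Rightarrow> real \<Rightarrow> real" where
  "quant m x = real_of_int \<lfloor>1/2 + m * x\<rfloor> / m"

definition disc_entropy_term :: "'a measure \<Rightarrow> ('a \<Rightarrow> 'b) \<Rightarrow> 'b \<Rightarrow> real" where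
  "disc_entropy_term M Y y =
     - measure M {\<omega> \<in> space M. Y \<omega> = y} * ln (measure M {\<omega> \<in> space M. Y \<omega> = y})"

definition disc_entropy_finite :: "'a measure \<Rightarrow> ('a \<Rightarrow> 'b) \<Rightarrow> bool" where
  "disc_entropy_finite M Y \<longleftrightarrow> disc_entropy_term M Y summable_on UNIV"

definition disc_entropy :: "'a measure \<Rightarrow> ('a \<Rightarrow> 'b) \<Rightarrow> real" where
  "disc_entropy M Y = infsum (disc_entropy_term M Y) UNIV"

definition diff_entropy :: "(real \<Rightarrow> real) \<Rightarrow> real" where
  "diff_entropy p = - (LINT x|lborel. p x * ln (p x))"

definition piecewise_continuous :: "(real \<Rightarrow> real) \<Rightarrow> bool" where
  "piecewise_continuous f \<longleftrightarrow>
     (\<forall>a b. finite {x \<in> {a..b}. \<not> isCont f x}) \<and>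
     (\<forall>x. (\<exists>l. (f \<longlongrightarrow> l) (at_left x)) \<and> (\<exists>r. (f \<longlongrightarrow> r) (at_right x)))"

end

theory Submission imports Defs begin

text \<open>Let \<open>q\<^sub>k\<close> be the mass of the \<open>k\<close>-th cell of the quantizer \<open>[x + s]\<^sub>m\<close> and let
  \<open>p\<^sub>m = m q\<^sub>k\<close> on that cell be the histogram density. Since \<open>p\<close> and \<open>p\<^sub>m\<close> give every cell
  the same mass, \<open>H([X + s]\<^sub>m) - log m = - \<integral> p log p\<^sub>m\<close>, so \<open>H([X + s]\<^sub>m) - log m - h(X)\<close>
  is the relative entropy \<open>\<integral> p log (p / p\<^sub>m)\<close>, which is nonnegative. For the converse bound,
  \<open>p\<^sub>m \<rightarrow> p\<close> at every continuity point of \<open>p\<close>, i.e. almost everywhere. On a bounded window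
  the integrand with \<open>p\<^sub>m\<close> replaced by \<open>max p\<^sub>m \<delta>\<close> is dominated (as \<open>p\<^sub>m \<le> ess sup p\<close>) and has
  a nonpositive limit, and the truncation at \<open>\<delta>\<close> costs at most \<open>\<delta>\<close> per unit length. Outside
  the window, the Gibbs inequality \<open>- log q\<^sub>k \<le> log m - log w + V / (m q\<^sub>k)\<close>, where \<open>w\<close> is the
  mass of the unit cell of \<open>x\<close> and \<open>V\<close> that of the unit cells near the \<open>k\<close>-th cell, bounds the
  integrand uniformly in \<open>m\<close> by an integrable function; this is where \<open>H([X]\<^sub>1) < \<infinity>\<close> enters.\<close>

lemma mult_ln_max_minus_ln_le:
  fixes t \<delta> :: real
  assumes "t > 0" "\<delta> > 0"
  shows "t * (ln (max t \<delta>) - ln t) \<le> \<delta>"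
proof (cases "t \<ge> \<delta>")
  case False
  have "t * (ln (\<delta> / t)) \<le> t * (\<delta> / t - 1)"
    using assms by (intro mult_left_mono ln_le_minus_one) auto
  also have "\<dots> = \<delta> - t"
    using assms by (simp add: field_simps)
  finally show ?thesis
    using False assms by (simp add: ln_div)
qed (use assms in simp)

lemma minus_ln_le_minus_ln_plus_ratio:
  fixes a b h :: real
  assumes "0 < a" "a \<le> b" "0 < h"
  shows "- ln h \<le> - ln a + b / h"
proof -
  have "ln (b / h) \<le> b / h - 1"
    using assms by (intro ln_le_minus_one) auto
  moreover have "ln (b / h) = ln b - ln h" "ln a \<le> ln b"
    using assms by (simp_all add: ln_div)
  ultimately show ?thesis
    by linarith
qed

lemma diff_le_mult_ln_ratio:
  fixes a b :: real
  assumes "0 < a" "0 < b"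
  shows "a - b \<le> a * (ln a - ln b)"
proof -
  have "a * ln (b / a) \<le> a * (b / a - 1)"
    using assms by (intro mult_left_mono ln_le_minus_one) auto
  also have "\<dots> = b - a"
    using assms by (simp add: field_simps)
  finally show ?thesis
    using assms by (simp add: ln_div algebra_simps)
qed

lemma summable_on_iff_nn_integral_finite:
  fixes g :: "'b \<Rightarrow> real"
  assumes "\<And>k. g k \<ge> 0"
  shows "g summable_on UNIV \<longleftrightarrow> (\<integral>\<^sup>+k. ennreal (g k) \<partial>count_space UNIV) < \<infinity>"
proof -
  have "g summable_on UNIV \<longleftrightarrow> integrable (count_space UNIV) g"
    using summable_on_iff_abs_summable_on_real abs_summable_equivalent
      Infinite_Set_Sum.abs_summable_on_def by blast
  also have "\<dots> \<longleftrightarrow> (\<integral>\<^sup>+k. ennreal (g k) \<partial>count_space UNIV) < \<infinity>"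
    using assms by (subst integrable_iff_bounded) auto
  finally show ?thesis .
qed

text \<open>Both sides are \<open>0\<close> when the series diverges.\<close>
lemma infsum_nonneg_eq_enn2real_nn_integral:
  fixes g :: "'b \<Rightarrow> real"
  assumes "\<And>k. g k \<ge> 0"
  shows "infsum g UNIV = enn2real (\<integral>\<^sup>+k. ennreal (g k) \<partial>count_space UNIV)"
proof (cases "g summable_on UNIV")
  case True
  then have "integrable (count_space UNIV) g"
    using summable_on_iff_abs_summable_on_real abs_summable_equivalent
      Infinite_Set_Sum.abs_summable_on_def by blast
  then show ?thesis
    using assms by (subst integral_eq_nn_integral[symmetric])
      (auto simp: infsetsum_infsum[symmetric] Infinite_Set_Sum.abs_summable_on_def infsetsum_def)
next
  case False
  then show ?thesis
    using summable_on_iff_nn_integral_finite[of g, OF assms]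
    by (simp add: infsum_not_exists not_less top_unique)
qed

lemma nn_integral_split_countable:
  fixes \<phi> :: "'a \<Rightarrow> 'b::countable" and g :: "'a \<Rightarrow> ennreal" and G :: "'b \<Rightarrow> ennreal"
  assumes [measurable]: "\<phi> \<in> measurable M (count_space UNIV)" "g \<in> borel_measurable M"
  shows "(\<integral>\<^sup>+x. g x * G (\<phi> x) \<partial>M) =
    (\<integral>\<^sup>+k. (\<integral>\<^sup>+x. g x * indicator {x. \<phi> x = k} x \<partial>M) * G k \<partial>count_space UNIV)"
proof -
  have "(\<integral>\<^sup>+x. g x * G (\<phi> x) \<partial>M) =
      (\<integral>\<^sup>+x. \<integral>\<^sup>+k. g x * G (\<phi> x) * indicator {\<phi> x} k \<partial>count_space UNIV \<partial>M)"
    by (simp add: nn_integral_cmult_indicator)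
  also have "\<dots> = (\<integral>\<^sup>+x. \<integral>\<^sup>+k. g x * indicator {x. \<phi> x = k} x * G k \<partial>count_space UNIV \<partial>M)"
    by (intro nn_integral_cong) (auto simp: indicator_def)
  also have "\<dots> = (\<integral>\<^sup>+k. \<integral>\<^sup>+x. g x * indicator {x. \<phi> x = k} x * G k \<partial>M \<partial>count_space UNIV)"
    by (rule nn_integral_count_space_nn_integral) auto
  finally show ?thesis
    by (simp add: nn_integral_multc)
qed

lemma integrable_and_integral_le_if_nn_integral_le:
  fixes f g :: "'a \<Rightarrow> real"
  assumes [measurable]: "f \<in> borel_measurable M" and "\<And>x. 0 \<le> f x" "\<And>x. 0 \<le> g x"
    and "integrable M g" "(\<integral>\<^sup>+x. ennreal (f x) \<partial>M) \<le> (\<integral>\<^sup>+x. ennreal (g x) \<partial>M)"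
  shows "integrable M f" "integral\<^sup>L M f \<le> integral\<^sup>L M g"
proof -
  have g_fin: "(\<integral>\<^sup>+x. ennreal (g x) \<partial>M) < \<infinity>"
    using assms(3,4) by (simp add: integrable_iff_bounded)
  then show "integrable M f"
    using assms by (intro integrableI_nonneg) auto
  have "integral\<^sup>L M f = enn2real (\<integral>\<^sup>+x. ennreal (f x) \<partial>M)"
    using assms by (intro integral_eq_nn_integral) auto
  also have "\<dots> \<le> enn2real (\<integral>\<^sup>+x. ennreal (g x) \<partial>M)"
    using assms(5) g_fin by (intro enn2real_mono) auto
  also have "\<dots> = integral\<^sup>L M g"
    using assms by (intro integral_eq_nn_integral[symmetric]) auto
  finally show "integral\<^sup>L M f \<le> integral\<^sup>L M g" .
qed

lemma AE_isCont_if_piecewise_continuous: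
  assumes "piecewise_continuous f"
  shows "AE x in lborel. isCont f x"
proof (rule AE_I')
  have "{x. \<not> isCont f x} = (\<Union>n::nat. {x \<in> {-real n..real n}. \<not> isCont f x})"
  proof (intro set_eqI iffI)
    fix x assume "x \<in> {x. \<not> isCont f x}"
    moreover obtain n :: nat where "\<bar>x\<bar> \<le> real n"
      using real_arch_simple by blast
    ultimately show "x \<in> (\<Union>n::nat. {x \<in> {-real n..real n}. \<not> isCont f x})"
      by (auto intro!: exI[of _ n] simp: abs_le_iff)
  qed auto
  moreover have "finite {x \<in> {-real n..real n}. \<not> isCont f x}" for n
    using assms unfolding piecewise_continuous_def by blast
  ultimately have "countable {x. \<not> isCont f x}"
    by (simp add: countable_finite)
  then show "{x. \<not> isCont f x} \<in> null_sets lborel"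
    by (rule countable_imp_null_set_lborel)
qed auto

lemma AE_le_if_esssup_finite:
  fixes f :: "real \<Rightarrow> real"
  assumes "esssup lborel (\<lambda>x. ereal (f x)) < \<infinity>"
  obtains L where "AE x in lborel. f x \<le> L"
proof -
  define L where "L = real_of_ereal (esssup lborel (\<lambda>x. ereal (f x)))"
  have "esssup lborel (\<lambda>x. ereal (f x)) \<le> ereal L"
    using assms unfolding L_def by (cases "esssup lborel (\<lambda>x. ereal (f x))") auto
  with esssup_AE[of "\<lambda>x. ereal (f x)" lborel] have "AE x in lborel. f x \<le> L"
    by (auto elim!: eventually_mono) (metis ereal_less_eq(3) order_trans)
  then show ?thesis
    by (rule that)
qed

section \<open>Quantization cells\<close>

definition cell :: "real \<Rightarrow> real \<Rightarrow> real \<Rightarrow> int" where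
  "cell m s x = \<lfloor>1/2 + m * (x + s)\<rfloor>"

lemma cell_measurable [measurable]: "cell m s \<in> measurable lborel (count_space UNIV)"
  unfolding cell_def by measurable

lemma quant_shift_eq_cell: "quant m (x + s) = real_of_int (cell m s x) / m"
  unfolding quant_def cell_def by simp

lemma cell_preimage:
  assumes "m > 0"
  shows "{x. cell m s x = k} = {(k - 1/2) / m - s ..< (k + 1/2) / m - s}"
proof -
  have "cell m s x = k \<longleftrightarrow> (k - 1/2) / m - s \<le> x \<and> x < (k + 1/2) / m - s" for x
  proof -
    have "cell m s x = k \<longleftrightarrow> k \<le> 1/2 + m * (x + s) \<and> 1/2 + m * (x + s) < k + 1"
      unfolding cell_def by (simp add: floor_eq_iff)
    also have "\<dots> \<longleftrightarrow> (k - 1/2) / m - s \<le> x \<and> x < (k + 1/2) / m - s"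
      using assms by (simp add: field_simps)
    finally show ?thesis .
  qed
  then show ?thesis
    by (intro set_eqI) (simp only: mem_Collect_eq atLeastLessThan_iff)
qed

lemma emeasure_cell_preimage:
  assumes "m > 0"
  shows "emeasure lborel {x. cell m s x = k} = ennreal (1/m)"
proof -
  have "(k + 1/2) / m - s - ((k - 1/2) / m - s) = 1/m"
    using assms by (simp add: field_simps)
  with assms show ?thesis
    unfolding cell_preimage[OF assms] by (simp add: divide_right_mono)
qed

lemma dist_cell_center:
  assumes "m > 0"
  shows "\<bar>x - (real_of_int (cell m s x) / m - s)\<bar> \<le> 1 / (2 * m)"
proof -
  have "\<bar>t - \<lfloor>1/2 + t\<rfloor>\<bar> \<le> 1/2" for t :: real
  proof -
    define f where "f = real_of_int \<lfloor>1/2 + t\<rfloor>"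
    have "f \<le> 1/2 + t" "1/2 + t < f + 1"
      unfolding f_def by simp_all
    then show ?thesis
      unfolding f_def[symmetric] by (intro abs_leI) linarith+
  qed
  then have bound: "\<bar>m * (x + s) - cell m s x\<bar> \<le> 1/2"
    unfolding cell_def .
  have "x - (cell m s x / m - s) = (m * (x + s) - cell m s x) / m"
    using assms by (simp add: field_simps)
  then have "\<bar>x - (cell m s x / m - s)\<bar> = \<bar>m * (x + s) - cell m s x\<bar> / m"
    using assms by (simp add: abs_divide)
  also have "\<dots> \<le> (1/2) / m"
    using bound assms by (intro divide_right_mono) simp_all
  finally show ?thesis
    by simp
qed

lemma dist_same_cell:
  assumes "m > 0" "cell m s y = cell m s x"
  shows "\<bar>y - x\<bar> \<le> 1/m"
  using dist_cell_center[OF assms(1), of y s] dist_cell_center[OF assms(1), of x s] assms(2)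
  by simp

lemma nn_integral_cell_step:
  fixes G :: "int \<Rightarrow> ennreal"
  assumes "m > 0"
  shows "(\<integral>\<^sup>+x. G (cell m s x) \<partial>lborel) = (\<integral>\<^sup>+k. G k * ennreal (1/m) \<partial>count_space UNIV)"
  using nn_integral_split_countable[of "cell m s" lborel "\<lambda>_. 1" G] assms
  by (simp add: emeasure_cell_preimage mult.commute)

lemma unit_cell_shift: "cell 1 0 (y + real_of_int i) = cell 1 0 y + i"
  unfolding cell_def by (metis add.assoc add.right_neutral floor_add_int mult_1)

lemma unit_cell_diff:
  assumes "\<bar>y - z\<bar> < 1"
  shows "cell 1 0 y - cell 1 0 z \<in> {-1..1}"
proof -
  have "\<lfloor>1/2 + y\<rfloor> \<le> \<lfloor>1/2 + z\<rfloor> + 1" "\<lfloor>1/2 + z\<rfloor> \<le> \<lfloor>1/2 + y\<rfloor> + 1"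
    using assms by (simp_all add: floor_le_iff) linarith+
  then show ?thesis
    unfolding cell_def by simp
qed

definition centre_window :: "real \<Rightarrow> real \<Rightarrow> real \<Rightarrow> int \<Rightarrow> real" where
  "centre_window m s R k = (if \<bar>real_of_int k / m - s\<bar> \<le> R then 1 else 0)"

lemma centre_window_nonneg: "0 \<le> centre_window m s R k"
  and centre_window_le_1: "centre_window m s R k \<le> 1"
  unfolding centre_window_def by auto

lemma centre_window_cases: "centre_window m s R k = 0 \<or> centre_window m s R k = 1"
  unfolding centre_window_def by auto

lemma abs_le_if_centre_window:
  assumes "m \<ge> 1" "centre_window m s R (cell m s x) \<noteq> 0"
  shows "\<bar>x\<bar> \<le> R + 1/2"
proof -
  define c where "c = real_of_int (cell m s x) / m - s"
  have "\<bar>x - c\<bar> \<le> 1/2" "\<bar>c\<bar> \<le> R"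
    using dist_cell_center[of m x s] assms order_trans[of _ "1 / (2 * m)" "1/2"]
    unfolding c_def centre_window_def by (auto simp: field_simps split: if_splits)
  then show ?thesis
    using abs_triangle_ineq[of "x - c" c] by simp
qed

lemma abs_ge_if_not_centre_window:
  assumes "m \<ge> 1" "centre_window m s R (cell m s x) \<noteq> 1"
  shows "\<bar>x\<bar> \<ge> R - 1/2"
proof -
  define c where "c = real_of_int (cell m s x) / m - s"
  have "\<bar>x - c\<bar> \<le> 1/2" "\<bar>c\<bar> > R"
    using dist_cell_center[of m x s] assms order_trans[of _ "1 / (2 * m)" "1/2"]
    unfolding c_def centre_window_def by (auto simp: field_simps split: if_splits)
  then show ?thesis
    using abs_triangle_ineq[of "c - x" x] by (simp add: abs_minus_commute)
qed

lemma eventually_cell_centre_close: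
  assumes "e > 0"
  shows "eventually (\<lambda>n. real n \<ge> 1 \<and> (\<forall>s x. \<bar>x - (real_of_int (cell (real n) s x) / real n - s)\<bar> < e))
    sequentially"
proof -
  have "(\<lambda>n. 1 / real n / 2) \<longlonglongrightarrow> 0"
    using lim_1_over_n by (rule tendsto_divide_zero)
  then have "eventually (\<lambda>n. 1 / real n / 2 < e) sequentially"
    using assms by (rule order_tendstoD)
  with eventually_ge_at_top[of 1] show ?thesis
  proof eventually_elim
    case (elim n)
    have "1 / (2 * real n) < e"
      using elim(2) by (simp add: mult.commute)
    moreover have "\<bar>x - (real_of_int (cell (real n) s x) / real n - s)\<bar> \<le> 1 / (2 * real n)" for s x
      using elim(1) by (intro dist_cell_center) simp
    ultimately show ?case
      using elim(1) by (auto intro: order.strict_trans1)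
  qed
qed

lemma centre_window_tendsto:
  assumes "\<bar>x\<bar> \<noteq> R"
  shows "(\<lambda>n. centre_window (real n) (c n) R (cell (real n) (c n) x)) \<longlonglongrightarrow> indicator {x. \<bar>x\<bar> < R} x"
proof (rule tendsto_eventually)
  have "\<bar>\<bar>x\<bar> - R\<bar> > 0"
    using assms by simp
  from eventually_cell_centre_close[OF this]
  show "eventually (\<lambda>n. centre_window (real n) (c n) R (cell (real n) (c n) x) = indicator {x. \<bar>x\<bar> < R} x)
    sequentially"
  proof eventually_elim
    case (elim n)
    then have "\<bar>x - (real_of_int (cell (real n) (c n) x) / real n - c n)\<bar> < \<bar>\<bar>x\<bar> - R\<bar>"
      by blast
    then show ?case
      unfolding centre_window_def by (auto simp: indicator_def abs_if split: if_splits)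
  qed
qed

lemma integrable_mult_cell_weight:
  fixes T :: "int \<Rightarrow> real"
  assumes "integrable lborel f" "\<And>k. 0 \<le> T k" "\<And>k. T k \<le> 1"
  shows "integrable lborel (\<lambda>x. T (cell m s x) * f x)"
proof (rule Bochner_Integration.integrable_bound[OF assms(1)])
  show "(\<lambda>x. T (cell m s x) * f x) \<in> borel_measurable lborel"
    using assms(1) by measurable
  show "AE x in lborel. norm (T (cell m s x) * f x) \<le> norm (f x)"
    using assms(2,3) by (simp add: abs_mult mult_left_le_one_le)
qed

section \<open>Cell masses and the discrete entropy\<close>

locale quantized_density = prob_space M for M :: "'a measure" +
  fixes X :: "'a \<Rightarrow> real" and p :: "real \<Rightarrow> real"
  assumes density_nonneg: "\<And>x. p x \<ge> 0"
    and distributed_X: "distributed M lborel X (\<lambda>x. ennreal (p x))"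
begin

lemma density_measurable [measurable]: "p \<in> borel_measurable lborel"
  using distributed_real_measurable[OF _ distributed_X] density_nonneg by auto

lemma nn_integral_density: "(\<integral>\<^sup>+x. ennreal (p x) \<partial>lborel) = 1"
  using distributed_emeasure[OF distributed_X, of UNIV] by (simp add: emeasure_space_1)

lemma density_integrable: "integrable lborel p"
  by (rule integrableI_nonneg) (use nn_integral_density density_nonneg in auto)

lemma integral_density: "integral\<^sup>L lborel p = 1"
  by (subst integral_eq_nn_integral) (use nn_integral_density density_nonneg in auto)

definition cell_mass :: "real \<Rightarrow> real \<Rightarrow> int \<Rightarrow> real" where
  "cell_mass m s k = prob {\<omega> \<in> space M. cell m s (X \<omega>) = k}"

lemma cell_mass_nonneg: "cell_mass m s k \<ge> 0"
  unfolding cell_mass_def by simp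

lemma cell_mass_le_1: "cell_mass m s k \<le> 1"
  unfolding cell_mass_def by simp

lemma nn_integral_density_cell:
  "(\<integral>\<^sup>+x. ennreal (p x) * indicator {x. cell m s x = k} x \<partial>lborel) = ennreal (cell_mass m s k)"
proof -
  have "{\<omega> \<in> space M. cell m s (X \<omega>) = k} = X -` {x. cell m s x = k} \<inter> space M"
    by auto
  then show ?thesis
    using distributed_emeasure[OF distributed_X, of "{x. cell m s x = k}"]
    by (simp add: cell_mass_def emeasure_eq_measure)
qed

lemma nn_integral_density_comp_cell:
  "(\<integral>\<^sup>+x. ennreal (p x) * G (cell m s x) \<partial>lborel) =
    (\<integral>\<^sup>+k. ennreal (cell_mass m s k) * G k \<partial>count_space UNIV)"
  by (subst nn_integral_split_countable) (simp_all add: nn_integral_density_cell)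

definition cell_surprisal :: "real \<Rightarrow> real \<Rightarrow> real \<Rightarrow> real" where
  "cell_surprisal m s x = - ln (cell_mass m s (cell m s x))"

lemma cell_surprisal_measurable [measurable]: "cell_surprisal m s \<in> borel_measurable lborel"
  unfolding cell_surprisal_def by measurable

lemma minus_ln_cell_mass_nonneg: "- ln (cell_mass m s k) \<ge> 0"
  using cell_mass_nonneg[of m s k] cell_mass_le_1[of m s k]
  by (cases "cell_mass m s k = 0") auto

lemma cell_surprisal_nonneg: "cell_surprisal m s x \<ge> 0"
  unfolding cell_surprisal_def by (rule minus_ln_cell_mass_nonneg)

lemma disc_entropy_term_quant:
  assumes "m > 0"
  shows "disc_entropy_term M (\<lambda>\<omega>. quant m (X \<omega> + s)) (real_of_int k / m) =
      - cell_mass m s k * ln (cell_mass m s k)"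
proof -
  have "{\<omega> \<in> space M. quant m (X \<omega> + s) = real_of_int k / m} = {\<omega> \<in> space M. cell m s (X \<omega>) = k}"
    using assms by (auto simp: quant_shift_eq_cell)
  then show ?thesis
    unfolding disc_entropy_term_def cell_mass_def by simp
qed

lemma disc_entropy_term_quant_off_grid:
  assumes "m > 0" "y \<notin> range (\<lambda>k::int. real_of_int k / m)"
  shows "disc_entropy_term M (\<lambda>\<omega>. quant m (X \<omega> + s)) y = 0"
proof -
  have empty: "{\<omega> \<in> space M. quant m (X \<omega> + s) = y} = {}"
    using assms by (auto simp: quant_shift_eq_cell)
  show ?thesis
    unfolding disc_entropy_term_def empty by simp
qed

lemma nn_integral_entropy_series:
  "(\<integral>\<^sup>+k. ennreal (- cell_mass m s k * ln (cell_mass m s k)) \<partial>count_space UNIV) =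
    (\<integral>\<^sup>+x. ennreal (p x * cell_surprisal m s x) \<partial>lborel)"
proof -
  have "(\<integral>\<^sup>+x. ennreal (p x * cell_surprisal m s x) \<partial>lborel) =
      (\<integral>\<^sup>+x. ennreal (p x) * ennreal (cell_surprisal m s x) \<partial>lborel)"
    by (simp only: ennreal_mult[OF density_nonneg cell_surprisal_nonneg])
  also have "\<dots> = (\<integral>\<^sup>+k. ennreal (cell_mass m s k) * ennreal (- ln (cell_mass m s k)) \<partial>count_space UNIV)"
    unfolding cell_surprisal_def by (rule nn_integral_density_comp_cell)
  also have "\<dots> = (\<integral>\<^sup>+k. ennreal (- cell_mass m s k * ln (cell_mass m s k)) \<partial>count_space UNIV)"
    by (simp only: ennreal_mult[OF cell_mass_nonneg minus_ln_cell_mass_nonneg, symmetric] mult_minus_right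
        mult_minus_left)
  finally show ?thesis ..
qed

text \<open>Both sides are \<open>0\<close> when the entropy is infinite.\<close>
lemma
  assumes "m > 0"
  shows disc_entropy_finite_quant_iff:
      "disc_entropy_finite M (\<lambda>\<omega>. quant m (X \<omega> + s)) \<longleftrightarrow>
        integrable lborel (\<lambda>x. p x * cell_surprisal m s x)"
    and disc_entropy_quant:
      "disc_entropy M (\<lambda>\<omega>. quant m (X \<omega> + s)) = (\<integral>x. p x * cell_surprisal m s x \<partial>lborel)"
proof -
  define T where "T = disc_entropy_term M (\<lambda>\<omega>. quant m (X \<omega> + s))"
  define g where "g k = - cell_mass m s k * ln (cell_mass m s k)" for k
  define grid where "grid = (\<lambda>k::int. real_of_int k / m)"
  have inj: "inj grid"
    using assms unfolding grid_def by (auto simp: inj_on_def)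
  have T_grid: "T \<circ> grid = g"
    using disc_entropy_term_quant[OF assms] unfolding T_def g_def grid_def by (auto simp: fun_eq_iff)
  have off_grid: "y \<in> UNIV - range grid \<Longrightarrow> T y = 0" for y
    using disc_entropy_term_quant_off_grid[OF assms] unfolding T_def grid_def by blast
  have summable: "T summable_on UNIV \<longleftrightarrow> g summable_on UNIV"
    using summable_on_cong_neutral[of "range grid" UNIV T T] summable_on_reindex[OF inj, of T]
      off_grid T_grid
    by auto
  have sum: "infsum T UNIV = infsum g UNIV"
    using infsum_cong_neutral[of "range grid" UNIV T T] infsum_reindex[OF inj, of T] off_grid T_grid
    by auto
  have g_nonneg: "g k \<ge> 0" for k
    unfolding g_def using mult_nonneg_nonneg[OF cell_mass_nonneg minus_ln_cell_mass_nonneg] by simp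
  have nonneg: "0 \<le> p x * cell_surprisal m s x" for x
    using density_nonneg cell_surprisal_nonneg by simp
  show "disc_entropy_finite M (\<lambda>\<omega>. quant m (X \<omega> + s)) \<longleftrightarrow>
      integrable lborel (\<lambda>x. p x * cell_surprisal m s x)"
    unfolding disc_entropy_finite_def T_def[symmetric] summable
      summable_on_iff_nn_integral_finite[of g, OF g_nonneg] g_def nn_integral_entropy_series
    using nonneg by (simp add: integrable_iff_bounded)
  show "disc_entropy M (\<lambda>\<omega>. quant m (X \<omega> + s)) = (\<integral>x. p x * cell_surprisal m s x \<partial>lborel)"
    unfolding disc_entropy_def T_def[symmetric] sum
      infsum_nonneg_eq_enn2real_nn_integral[of g, OF g_nonneg] g_def nn_integral_entropy_series
    using nonneg by (simp add: integral_eq_nn_integral)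
qed

lemma AE_cell_mass_pos:
  "AE x in lborel. p x > 0 \<longrightarrow> cell_mass m s (cell m s x) > 0"
proof -
  define G where "G k = (if cell_mass m s k = 0 then 1 else 0 :: ennreal)" for k
  have "(\<lambda>k. ennreal (cell_mass m s k) * G k) = (\<lambda>_. 0)"
    by (simp add: G_def fun_eq_iff)
  then have "(\<integral>\<^sup>+x. ennreal (p x) * G (cell m s x) \<partial>lborel) = 0"
    unfolding nn_integral_density_comp_cell by simp
  then have "AE x in lborel. ennreal (p x) * G (cell m s x) = 0"
    by (simp add: nn_integral_0_iff_AE)
  then show ?thesis
    by eventually_elim (use cell_mass_nonneg in \<open>auto simp: G_def less_le split: if_splits\<close>)
qed

section \<open>The histogram density\<close>

definition hist_density :: "real \<Rightarrow> real \<Rightarrow> real \<Rightarrow> real" where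
  "hist_density m s x = m * cell_mass m s (cell m s x)"

lemma hist_density_measurable [measurable]: "hist_density m s \<in> borel_measurable lborel"
  unfolding hist_density_def by measurable

lemma hist_density_nonneg: "m \<ge> 0 \<Longrightarrow> hist_density m s x \<ge> 0"
  unfolding hist_density_def using cell_mass_nonneg by simp

lemma nn_integral_density_eq_hist:
  assumes "m > 0"
  shows "(\<integral>\<^sup>+x. ennreal (p x) * G (cell m s x) \<partial>lborel) =
    (\<integral>\<^sup>+x. ennreal (hist_density m s x) * G (cell m s x) \<partial>lborel)"
proof -
  have "ennreal (m * q) * G k * ennreal (1/m) = ennreal q * G k" if "q \<ge> 0" for q k
    using assms that by (simp add: ennreal_mult[symmetric] mult.commute mult.left_commute)
  then have "(\<integral>\<^sup>+x. ennreal (hist_density m s x) * G (cell m s x) \<partial>lborel) =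
      (\<integral>\<^sup>+k. ennreal (cell_mass m s k) * G k \<partial>count_space UNIV)"
    using nn_integral_cell_step[OF assms, of "\<lambda>k. ennreal (m * cell_mass m s k) * G k" s]
    unfolding hist_density_def by (simp add: cell_mass_nonneg)
  then show ?thesis
    by (simp add: nn_integral_density_comp_cell)
qed

lemma
  assumes "m > 0"
  shows hist_density_integrable: "integrable lborel (hist_density m s)"
    and integral_hist_density: "integral\<^sup>L lborel (hist_density m s) = 1"
proof -
  have nn: "(\<integral>\<^sup>+x. ennreal (hist_density m s x) \<partial>lborel) = 1"
    using nn_integral_density_eq_hist[OF assms, of "\<lambda>_. 1" s] by (simp add: nn_integral_density)
  show "integrable lborel (hist_density m s)"
    by (rule integrableI_nonneg) (use nn hist_density_nonneg assms in auto)
  show "integral\<^sup>L lborel (hist_density m s) = 1"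
    by (subst integral_eq_nn_integral) (use nn hist_density_nonneg assms in auto)
qed

lemma cell_mass_eq_integral:
  "cell_mass m s k = (\<integral>y. p y * indicator {y. cell m s y = k} y \<partial>lborel)"
proof -
  have "(\<integral>\<^sup>+y. ennreal (p y * indicator {y. cell m s y = k} y) \<partial>lborel) =
      (\<integral>\<^sup>+y. ennreal (p y) * indicator {y. cell m s y = k} y \<partial>lborel)"
    by (intro nn_integral_cong) (simp add: indicator_def)
  then have "(\<integral>\<^sup>+y. ennreal (p y * indicator {y. cell m s y = k} y) \<partial>lborel) = ennreal (cell_mass m s k)"
    by (simp only: nn_integral_density_cell)
  then show ?thesis
    using density_nonneg cell_mass_nonneg by (subst integral_eq_nn_integral) auto
qed

lemma hist_density_close:
  assumes m: "m > 0" and close: "\<And>y. cell m s y = cell m s x \<Longrightarrow> \<bar>p y - p x\<bar> \<le> e"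
  shows "\<bar>hist_density m s x - p x\<bar> \<le> e"
proof -
  define C where "C = {y. cell m s y = cell m s x}"
  have [measurable]: "C \<in> sets lborel" and C: "emeasure lborel C = ennreal (1/m)"
    unfolding C_def using emeasure_cell_preimage[OF m] by auto
  then have ind: "integrable lborel (indicator C :: real \<Rightarrow> real)"
    by simp
  have measure_C: "(\<integral>y. indicator C y \<partial>lborel) = 1/m"
    using C m by (simp add: measure_def)
  have pC: "integrable lborel (\<lambda>y. p y * indicator C y)"
    by (rule integrable_real_mult_indicator) (use \<open>C \<in> sets lborel\<close> density_integrable in auto)
  have "(\<integral>y. (p y - p x) * indicator C y \<partial>lborel) =
      (\<integral>y. p y * indicator C y \<partial>lborel) - (\<integral>y. p x * indicator C y \<partial>lborel)"
    unfolding left_diff_distrib using pC ind by (intro Bochner_Integration.integral_diff) auto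
  then have "hist_density m s x - p x = m * (\<integral>y. (p y - p x) * indicator C y \<partial>lborel)"
    unfolding hist_density_def cell_mass_eq_integral C_def[symmetric]
    using measure_C m by (simp add: right_diff_distrib)
  then have "\<bar>hist_density m s x - p x\<bar> = m * \<bar>\<integral>y. (p y - p x) * indicator C y \<partial>lborel\<bar>"
    using m by (simp add: abs_mult)
  also have "\<dots> \<le> m * (\<integral>y. e * indicator C y \<partial>lborel)"
  proof (intro mult_left_mono integral_abs_bound_integral)
    show "integrable lborel (\<lambda>y. (p y - p x) * indicator C y)"
      unfolding left_diff_distrib using pC ind by auto
    show "\<bar>(p y - p x) * indicator C y\<bar> \<le> e * indicator C y" for y
      using close[of y] by (simp add: C_def indicator_def)
  qed (use ind m in auto)
  also have "\<dots> = e"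
    using measure_C m by simp
  finally show ?thesis .
qed

lemma hist_density_tendsto:
  assumes "isCont p x"
  shows "(\<lambda>n. hist_density (real n) (c n) x) \<longlonglongrightarrow> p x"
proof (rule LIMSEQ_I)
  fix r :: real
  assume "r > 0"
  then obtain d where d: "d > 0" "\<And>y. dist y x < d \<Longrightarrow> dist (p y) (p x) < r / 2"
    using assms unfolding continuous_at_eps_delta by (meson half_gt_zero)
  obtain N :: nat where N: "1 / d < real N"
    using reals_Archimedean2 by blast
  have "norm (hist_density (real n) (c n) x - p x) < r" if "n \<ge> N" for n
  proof -
    have "0 < 1 / d"
      using d by simp
    then have n: "real n > 0"
      using N that by linarith
    have "real N > 0"
      using N \<open>0 < 1 / d\<close> by linarith
    then have "1 / real n \<le> 1 / real N"
      using that by (intro divide_left_mono) auto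
    also have "\<dots> < d"
      using N d \<open>real N > 0\<close> by (simp add: field_simps)
    finally have n': "1 / real n < d" .
    have "\<bar>hist_density (real n) (c n) x - p x\<bar> \<le> r / 2"
    proof (rule hist_density_close[OF n])
      fix y
      assume "cell (real n) (c n) y = cell (real n) (c n) x"
      then have "\<bar>y - x\<bar> < d"
        using dist_same_cell[OF n] n' by fastforce
      then show "\<bar>p y - p x\<bar> \<le> r / 2"
        using d(2)[of y] by (simp add: dist_real_def)
    qed
    then show ?thesis
      using \<open>r > 0\<close> by simp
  qed
  then show "\<exists>N. \<forall>n\<ge>N. norm (hist_density (real n) (c n) x - p x) < r"
    by blast
qed

section \<open>A Gibbs bound through unit cells\<close>

text \<open>Fine cells have length at most \<open>1\<close> when \<open>m \<ge> 1\<close>, so the unit cell of any point of the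
  \<open>k\<close>-th fine cell is one of the three unit cells around its centre, which together have
  mass \<open>near_mass m s k\<close>; these in turn lie among the five unit cells around the point.\<close>
definition near_mass :: "real \<Rightarrow> real \<Rightarrow> int \<Rightarrow> real" where
  "near_mass m s k = (\<Sum>i\<in>{-1..1}. cell_mass 1 0 (cell 1 0 (real_of_int k / m - s) + i))"

definition wide_mass :: "real \<Rightarrow> real" where
  "wide_mass x = (\<Sum>i\<in>{-2..2}. cell_mass 1 0 (cell 1 0 x + i))"

lemma near_mass_nonneg: "near_mass m s k \<ge> 0"
  unfolding near_mass_def by (intro sum_nonneg) (simp add: cell_mass_nonneg)

lemma wide_mass_nonneg: "wide_mass x \<ge> 0"
  unfolding wide_mass_def by (intro sum_nonneg) (simp add: cell_mass_nonneg)

lemma unit_cell_mass_le_near_mass: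
  assumes "m \<ge> 1"
  shows "cell_mass 1 0 (cell 1 0 x) \<le> near_mass m s (cell m s x)"
proof -
  define c where "c = real_of_int (cell m s x) / m - s"
  have "\<bar>x - c\<bar> < 1"
    using dist_cell_center[of m x s] assms unfolding c_def by (simp add: field_simps)
  then have "cell 1 0 x - cell 1 0 c \<in> {-1..1}"
    by (rule unit_cell_diff)
  then have "cell_mass 1 0 (cell 1 0 c + (cell 1 0 x - cell 1 0 c)) \<le>
      (\<Sum>i\<in>{-1..1}. cell_mass 1 0 (cell 1 0 c + i))"
    by (intro member_le_sum) (auto simp: cell_mass_nonneg)
  then show ?thesis
    unfolding near_mass_def c_def by simp
qed

lemma near_mass_le_wide_mass:
  assumes "m \<ge> 1"
  shows "near_mass m s (cell m s x) \<le> wide_mass x"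
proof -
  define c where "c = real_of_int (cell m s x) / m - s"
  define d where "d = cell 1 0 c - cell 1 0 x"
  have "\<bar>c - x\<bar> < 1"
    using dist_cell_center[of m x s] assms unfolding c_def by (simp add: field_simps abs_minus_commute)
  then have d: "d \<in> {-1..1}"
    unfolding d_def by (rule unit_cell_diff)
  have "near_mass m s (cell m s x) = (\<Sum>i\<in>{-1..1}. cell_mass 1 0 (cell 1 0 x + (d + i)))"
    unfolding near_mass_def c_def[symmetric] d_def by (simp add: algebra_simps)
  also have "\<dots> = (\<Sum>j\<in>(\<lambda>i. d + i) ` {-1..1}. cell_mass 1 0 (cell 1 0 x + j))"
    by (subst sum.reindex) (auto simp: inj_on_def)
  also have "\<dots> \<le> wide_mass x"
    unfolding wide_mass_def using d by (intro sum_mono2) (auto simp: cell_mass_nonneg)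
  finally show ?thesis .
qed

lemma wide_mass_integrable: "integrable lborel wide_mass"
proof -
  have "integrable lborel (\<lambda>x. hist_density 1 0 (real_of_int i + 1 * x))" for i
    by (rule lborel_integrable_real_affine[OF hist_density_integrable]) auto
  then have "integrable lborel (\<lambda>x. \<Sum>i\<in>{-2..2}. hist_density 1 0 (real_of_int i + 1 * x))"
    by auto
  moreover have "wide_mass = (\<lambda>x. \<Sum>i\<in>{-2..2}. hist_density 1 0 (real_of_int i + 1 * x))"
    unfolding wide_mass_def hist_density_def using unit_cell_shift
    by (simp add: add.commute fun_eq_iff)
  ultimately show ?thesis
    by simp
qed

definition gibbs_excess :: "real \<Rightarrow> real \<Rightarrow> real \<Rightarrow> real" where
  "gibbs_excess m s x = p x * (near_mass m s (cell m s x) / hist_density m s x)"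

lemma gibbs_excess_measurable [measurable]: "gibbs_excess m s \<in> borel_measurable lborel"
  unfolding gibbs_excess_def near_mass_def by measurable

lemma gibbs_excess_nonneg: "m \<ge> 0 \<Longrightarrow> gibbs_excess m s x \<ge> 0"
  unfolding gibbs_excess_def
  using density_nonneg near_mass_nonneg hist_density_nonneg by simp

text \<open>On a cell of mass \<open>q\<close> the excess has \<open>p\<close>-mass \<open>near_mass / m\<close>, which is the
  integral of \<open>near_mass\<close> over that cell; the latter is pointwise below \<open>wide_mass\<close>.\<close>
lemma gibbs_excess_bound:
  fixes T :: "int \<Rightarrow> real"
  assumes m: "m \<ge> 1" and T: "\<And>k. 0 \<le> T k" "\<And>k. T k \<le> 1"
  shows "integrable lborel (\<lambda>x. T (cell m s x) * gibbs_excess m s x)"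
    and "(\<integral>x. T (cell m s x) * gibbs_excess m s x \<partial>lborel) \<le> (\<integral>x. T (cell m s x) * wide_mass x \<partial>lborel)"
proof -
  define G where "G k = T k * (near_mass m s k / (m * cell_mass m s k))" for k
  have G_nonneg: "G k \<ge> 0" for k
    unfolding G_def using T near_mass_nonneg cell_mass_nonneg m by simp
  have "T (cell m s x) * gibbs_excess m s x = p x * G (cell m s x)" for x
    unfolding G_def gibbs_excess_def hist_density_def by simp
  then have "(\<integral>\<^sup>+x. ennreal (T (cell m s x) * gibbs_excess m s x) \<partial>lborel) =
      (\<integral>\<^sup>+x. ennreal (p x) * ennreal (G (cell m s x)) \<partial>lborel)"
    using density_nonneg G_nonneg by (simp add: ennreal_mult)
  also have "\<dots> = (\<integral>\<^sup>+x. ennreal (hist_density m s x) * ennreal (G (cell m s x)) \<partial>lborel)"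
    using m by (intro nn_integral_density_eq_hist) simp
  also have "\<dots> \<le> (\<integral>\<^sup>+x. ennreal (T (cell m s x) * wide_mass x) \<partial>lborel)"
  proof (intro nn_integral_mono)
    fix x
    have "hist_density m s x * G (cell m s x) \<le> T (cell m s x) * near_mass m s (cell m s x)"
      using m T(1)[of "cell m s x"] near_mass_nonneg[of m s "cell m s x"]
      by (cases "cell_mass m s (cell m s x) = 0") (auto simp: G_def hist_density_def)
    also have "\<dots> \<le> T (cell m s x) * wide_mass x"
      using near_mass_le_wide_mass[OF m] T(1) by (rule mult_left_mono)
    finally have "ennreal (hist_density m s x * G (cell m s x)) \<le> ennreal (T (cell m s x) * wide_mass x)"
      by (rule ennreal_leI)
    then show "ennreal (hist_density m s x) * ennreal (G (cell m s x)) \<le>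
        ennreal (T (cell m s x) * wide_mass x)"
      using hist_density_nonneg[of m s x] G_nonneg m by (simp add: ennreal_mult)
  qed
  finally have le: "(\<integral>\<^sup>+x. ennreal (T (cell m s x) * gibbs_excess m s x) \<partial>lborel) \<le>
      (\<integral>\<^sup>+x. ennreal (T (cell m s x) * wide_mass x) \<partial>lborel)" .
  have "integrable lborel (\<lambda>x. T (cell m s x) * wide_mass x)"
    by (rule integrable_mult_cell_weight[of _ T]) (use wide_mass_integrable T in auto)
  then show "integrable lborel (\<lambda>x. T (cell m s x) * gibbs_excess m s x)"
    and "(\<integral>x. T (cell m s x) * gibbs_excess m s x \<partial>lborel) \<le> (\<integral>x. T (cell m s x) * wide_mass x \<partial>lborel)"
    using integrable_and_integral_le_if_nn_integral_le[OF _ _ _ _ le] T gibbs_excess_nonneg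
      wide_mass_nonneg m
    by auto
qed

lemma AE_surprisal_le_gibbs:
  assumes m: "m \<ge> 1"
  shows "AE x in lborel. p x * cell_surprisal m s x \<le>
    p x * ln m + p x * cell_surprisal 1 0 x + gibbs_excess m s x"
  using AE_cell_mass_pos[of m s] AE_cell_mass_pos[of 1 0]
proof eventually_elim
  case (elim x)
  show ?case
  proof (cases "p x > 0")
    case True
    define q where "q = cell_mass m s (cell m s x)"
    have q: "q > 0" and w: "cell_mass 1 0 (cell 1 0 x) > 0"
      using elim True unfolding q_def by auto
    have "- ln (m * q) \<le> - ln (cell_mass 1 0 (cell 1 0 x)) + near_mass m s (cell m s x) / (m * q)"
      using w unit_cell_mass_le_near_mass[OF m] q m
      by (intro minus_ln_le_minus_ln_plus_ratio) auto
    moreover have "ln (m * q) = ln m + ln q"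
      using q m by (simp add: ln_mult)
    ultimately have
      "- ln q \<le> ln m + cell_surprisal 1 0 x + near_mass m s (cell m s x) / hist_density m s x"
      unfolding cell_surprisal_def hist_density_def q_def by simp
    then have "p x * (- ln q) \<le>
        p x * (ln m + cell_surprisal 1 0 x + near_mass m s (cell m s x) / hist_density m s x)"
      using True by (intro mult_left_mono) auto
    then show ?thesis
      unfolding cell_surprisal_def gibbs_excess_def q_def by (simp add: algebra_simps)
  qed (use density_nonneg[of x] in \<open>simp add: gibbs_excess_def\<close>)
qed

lemma integrable_surprisal:
  assumes "integrable lborel (\<lambda>x. p x * cell_surprisal 1 0 x)" "m \<ge> 1"
  shows "integrable lborel (\<lambda>x. p x * cell_surprisal m s x)"
proof (rule Bochner_Integration.integrable_bound)
  show "integrable lborel (\<lambda>x. p x * ln m + p x * cell_surprisal 1 0 x + gibbs_excess m s x)"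
    using density_integrable assms gibbs_excess_bound(1)[OF assms(2), of "\<lambda>_. 1" s] by auto
  show "AE x in lborel. norm (p x * cell_surprisal m s x) \<le>
      norm (p x * ln m + p x * cell_surprisal 1 0 x + gibbs_excess m s x)"
    using AE_surprisal_le_gibbs[OF assms(2), of s]
    by eventually_elim (use density_nonneg cell_surprisal_nonneg in \<open>auto simp: abs_le_iff\<close>)
qed simp

end

section \<open>Convergence of the relative entropy\<close>

locale quantized_density_regular = quantized_density +
  fixes L :: real
  assumes density_bounded: "AE x in lborel. p x \<le> L"
    and unit_surprisal_integrable: "integrable lborel (\<lambda>x. p x * cell_surprisal 1 0 x)"
    and entropy_integrable: "integrable lborel (\<lambda>x. p x * ln (p x))"
    and density_AE_isCont: "AE x in lborel. isCont p x"
begin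

lemma hist_density_le:
  assumes m: "m > 0"
  shows "hist_density m s x \<le> L"
proof -
  define C where "C = {y. cell m s y = cell m s x}"
  have [measurable]: "C \<in> sets lborel" and C: "emeasure lborel C = ennreal (1/m)"
    unfolding C_def using emeasure_cell_preimage[OF m] by auto
  have "cell_mass m s (cell m s x) \<le> (\<integral>y. L * indicator C y \<partial>lborel)"
    unfolding cell_mass_eq_integral C_def[symmetric]
  proof (rule integral_mono_AE)
    show "integrable lborel (\<lambda>y. p y * indicator C y)"
      by (rule integrable_real_mult_indicator) (use \<open>C \<in> sets lborel\<close> density_integrable in auto)
    show "integrable lborel (\<lambda>y. L * indicator C y)"
      using C \<open>C \<in> sets lborel\<close> by simp
    show "AE y in lborel. p y * indicator C y \<le> L * indicator C y"
      using density_bounded by eventually_elim (simp add: indicator_def)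
  qed
  also have "\<dots> = L / m"
    using C m by (simp add: measure_def)
  finally show ?thesis
    using m unfolding hist_density_def by (simp add: field_simps)
qed

definition kl_density :: "real \<Rightarrow> real \<Rightarrow> real \<Rightarrow> real" where
  "kl_density m s x = p x * cell_surprisal m s x - p x * ln m + p x * ln (p x)"

lemma kl_density_measurable [measurable]: "kl_density m s \<in> borel_measurable lborel"
  unfolding kl_density_def by measurable

lemma kl_density_integrable: "m \<ge> 1 \<Longrightarrow> integrable lborel (kl_density m s)"
  unfolding kl_density_def
  using integrable_surprisal[OF unit_surprisal_integrable] density_integrable entropy_integrable
  by auto

lemma disc_entropy_quant_minus_ln:
  assumes m: "m \<ge> 1"
  shows "disc_entropy M (\<lambda>\<omega>. quant m (X \<omega> + s)) - ln m =
    integral\<^sup>L lborel (kl_density m s) + diff_entropy p"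
proof -
  have "integral\<^sup>L lborel (kl_density m s) =
      (\<integral>x. p x * cell_surprisal m s x \<partial>lborel) - (\<integral>x. p x * ln m \<partial>lborel) +
        (\<integral>x. p x * ln (p x) \<partial>lborel)"
    unfolding kl_density_def
    using integrable_surprisal[OF unit_surprisal_integrable m] density_integrable entropy_integrable
    by (subst Bochner_Integration.integral_add) (auto intro!: Bochner_Integration.integral_diff)
  then show ?thesis
    using m integral_density by (simp add: disc_entropy_quant diff_entropy_def)
qed

lemma integral_kl_density_nonneg:
  assumes m: "m \<ge> 1"
  shows "integral\<^sup>L lborel (kl_density m s) \<ge> 0"
proof -
  have "AE x in lborel. p x - hist_density m s x \<le> kl_density m s x"
    using AE_cell_mass_pos[of m s]
  proof eventually_elim
    case (elim x)
    show ?case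
    proof (cases "p x > 0")
      case True
      then have "cell_mass m s (cell m s x) > 0"
        using elim by simp
      then have "ln (hist_density m s x) = ln m + ln (cell_mass m s (cell m s x))"
        using m by (simp add: hist_density_def ln_mult)
      moreover have "p x - hist_density m s x \<le> p x * (ln (p x) - ln (hist_density m s x))"
        using True \<open>cell_mass m s (cell m s x) > 0\<close> m
        by (intro diff_le_mult_ln_ratio) (auto simp: hist_density_def)
      ultimately show ?thesis
        unfolding kl_density_def cell_surprisal_def by (simp add: algebra_simps)
    qed (use density_nonneg[of x] hist_density_nonneg[of m s x] m in \<open>simp add: kl_density_def\<close>)
  qed
  then have "(\<integral>x. p x - hist_density m s x \<partial>lborel) \<le> integral\<^sup>L lborel (kl_density m s)"
    using density_integrable hist_density_integrable[of m s] kl_density_integrable[OF m] m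
    by (intro integral_mono_AE) auto
  then show ?thesis
    using density_integrable hist_density_integrable[of m s] m
    by (simp add: integral_density integral_hist_density)
qed

definition core_term :: "real \<Rightarrow> real \<Rightarrow> real \<Rightarrow> real \<Rightarrow> real \<Rightarrow> real" where
  "core_term m s R \<delta> x =
    centre_window m s R (cell m s x) * (p x * (ln (p x) - ln (max (hist_density m s x) \<delta>)))"

definition core_bound :: "real \<Rightarrow> real \<Rightarrow> real \<Rightarrow> real" where
  "core_bound R \<delta> x =
    indicator {x. \<bar>x\<bar> \<le> R + 1/2} x * (\<bar>p x * ln (p x)\<bar> + p x * (\<bar>ln \<delta>\<bar> + \<bar>ln (max L \<delta>)\<bar>))"

lemma core_term_measurable [measurable]: "core_term m s R \<delta> \<in> borel_measurable lborel"
  unfolding core_term_def by measurable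

lemma core_bound_integrable: "integrable lborel (core_bound R \<delta>)"
proof -
  have "integrable lborel
      (\<lambda>x. (\<bar>p x * ln (p x)\<bar> + p x * (\<bar>ln \<delta>\<bar> + \<bar>ln (max L \<delta>)\<bar>)) * indicator {x. \<bar>x\<bar> \<le> R + 1/2} x)"
    using entropy_integrable density_integrable by (intro integrable_real_mult_indicator) auto
  then show ?thesis
    unfolding core_bound_def by (simp add: mult.commute)
qed

lemma abs_core_term_le:
  assumes m: "m \<ge> 1" and \<delta>: "\<delta> > 0"
  shows "\<bar>core_term m s R \<delta> x\<bar> \<le> core_bound R \<delta> x"
proof (cases "centre_window m s R (cell m s x) = 0")
  case False
  then have window: "centre_window m s R (cell m s x) = 1"
    using centre_window_cases by blast
  have x: "\<bar>x\<bar> \<le> R + 1/2"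
    using abs_le_if_centre_window[OF m False] .
  define h where "h = max (hist_density m s x) \<delta>"
  have "\<delta> \<le> h" "h \<le> max L \<delta>"
    unfolding h_def using hist_density_le[of m s x] m by auto
  then have "\<bar>ln h\<bar> \<le> \<bar>ln \<delta>\<bar> + \<bar>ln (max L \<delta>)\<bar>"
    using \<delta> by (simp add: abs_le_iff) (smt (verit) ln_le_cancel_iff)
  then have "p x * \<bar>ln h\<bar> \<le> p x * (\<bar>ln \<delta>\<bar> + \<bar>ln (max L \<delta>)\<bar>)"
    using density_nonneg by (rule mult_left_mono)
  moreover have "\<bar>core_term m s R \<delta> x\<bar> \<le> \<bar>p x * ln (p x)\<bar> + p x * \<bar>ln h\<bar>"
    unfolding core_term_def window h_def[symmetric]
    using abs_triangle_ineq4[of "p x * ln (p x)" "p x * ln h"] density_nonneg[of x]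
    by (simp add: right_diff_distrib abs_mult)
  ultimately show ?thesis
    unfolding core_bound_def using x by simp
qed (use density_nonneg[of x] in \<open>simp add: core_term_def core_bound_def\<close>)

lemma core_term_integrable: "m \<ge> 1 \<Longrightarrow> \<delta> > 0 \<Longrightarrow> integrable lborel (core_term m s R \<delta>)"
  by (rule Bochner_Integration.integrable_bound[OF core_bound_integrable])
    (auto intro: order_trans[OF abs_core_term_le abs_ge_self])

definition truncation_gap :: "real \<Rightarrow> real \<Rightarrow> real \<Rightarrow> real \<Rightarrow> int \<Rightarrow> real" where
  "truncation_gap m s R \<delta> k = centre_window m s R k *
    (if cell_mass m s k > 0 then ln (max (m * cell_mass m s k) \<delta>) - ln (m * cell_mass m s k) else 0)"

lemma truncation_gap_nonneg: "m > 0 \<Longrightarrow> \<delta> > 0 \<Longrightarrow> truncation_gap m s R \<delta> k \<ge> 0"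
  unfolding truncation_gap_def using centre_window_nonneg[of m s R k]
  by (auto intro!: mult_nonneg_nonneg)

text \<open>Integrating against \<open>p\<close> is integrating against the histogram density \<open>h\<close>, and
  \<open>h (ln (max h \<delta>) - ln h) \<le> \<delta>\<close>.\<close>
lemma truncation_gap_integral_le:
  assumes m: "m \<ge> 1" and \<delta>: "\<delta> > 0" and R: "R > 0"
  shows "integrable lborel (\<lambda>x. p x * truncation_gap m s R \<delta> (cell m s x))"
    and "(\<integral>x. p x * truncation_gap m s R \<delta> (cell m s x) \<partial>lborel) \<le> \<delta> * (2 * R + 1)"
proof -
  let ?G = "truncation_gap m s R \<delta>"
  define B where "B = {x::real. \<bar>x\<bar> \<le> R + 1/2}"
  have B: "B = {-(R + 1/2) .. R + 1/2}"
    unfolding B_def by auto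
  have "hist_density m s x * ?G (cell m s x) \<le> \<delta> * indicator B x" for x
  proof (cases "centre_window m s R (cell m s x) = 0 \<or> cell_mass m s (cell m s x) = 0")
    case False
    then have "x \<in> B" "centre_window m s R (cell m s x) = 1" "cell_mass m s (cell m s x) > 0"
      using abs_le_if_centre_window[OF m, of s R x] centre_window_cases[of m s R "cell m s x"]
        cell_mass_nonneg[of m s "cell m s x"]
      unfolding B_def by (auto simp: less_le)
    then show ?thesis
      using mult_ln_max_minus_ln_le[of "hist_density m s x" \<delta>] m \<delta>
      by (simp add: truncation_gap_def hist_density_def)
  qed (use \<delta> in \<open>auto simp: truncation_gap_def\<close>)
  then have "(\<integral>\<^sup>+x. ennreal (p x * ?G (cell m s x)) \<partial>lborel) \<le>
      (\<integral>\<^sup>+x. ennreal (\<delta> * indicator B x) \<partial>lborel)"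
    using nn_integral_density_eq_hist[of m "\<lambda>k. ennreal (?G k)" s] m density_nonneg
      truncation_gap_nonneg[of m, OF _ \<delta>] hist_density_nonneg[of m s]
    by (auto simp: ennreal_mult[symmetric] intro!: nn_integral_mono ennreal_leI)
  then show "integrable lborel (\<lambda>x. p x * ?G (cell m s x))"
    and "(\<integral>x. p x * ?G (cell m s x) \<partial>lborel) \<le> \<delta> * (2 * R + 1)"
    using integrable_and_integral_le_if_nn_integral_le
        [of "\<lambda>x. p x * ?G (cell m s x)" lborel "\<lambda>x. \<delta> * indicator B x"]
      density_nonneg truncation_gap_nonneg[of m, OF _ \<delta>] \<delta> R m
    by (auto simp: B)
qed

lemma integral_window_kl_density_le:
  assumes m: "m \<ge> 1" and \<delta>: "\<delta> > 0" and R: "R > 0"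
  shows "(\<integral>x. centre_window m s R (cell m s x) * kl_density m s x \<partial>lborel) \<le>
    integral\<^sup>L lborel (core_term m s R \<delta>) + \<delta> * (2 * R + 1)"
proof -
  let ?G = "truncation_gap m s R \<delta>"
  have "AE x in lborel. centre_window m s R (cell m s x) * kl_density m s x =
      core_term m s R \<delta> x + p x * ?G (cell m s x)"
    using AE_cell_mass_pos[of m s]
  proof eventually_elim
    case (elim x)
    show ?case
    proof (cases "p x > 0")
      case True
      then have "ln (hist_density m s x) = ln m + ln (cell_mass m s (cell m s x))"
        using elim m by (simp add: hist_density_def ln_mult)
      then show ?thesis
        using elim True
        by (simp add: kl_density_def core_term_def truncation_gap_def cell_surprisal_def
            hist_density_def algebra_simps)
    qed (use density_nonneg[of x] in \<open>simp add: kl_density_def core_term_def\<close>)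
  qed
  then have "(\<integral>x. centre_window m s R (cell m s x) * kl_density m s x \<partial>lborel) =
      (\<integral>x. core_term m s R \<delta> x + p x * ?G (cell m s x) \<partial>lborel)"
    by (intro integral_cong_AE) auto
  also have "\<dots> = integral\<^sup>L lborel (core_term m s R \<delta>) + (\<integral>x. p x * ?G (cell m s x) \<partial>lborel)"
    using core_term_integrable[OF m \<delta>] truncation_gap_integral_le(1)[OF assms]
    by (rule Bochner_Integration.integral_add)
  finally show ?thesis
    using truncation_gap_integral_le(2)[OF assms, of s] by simp
qed

definition tail_dominant :: "real \<Rightarrow> real" where
  "tail_dominant x = \<bar>p x * ln (p x)\<bar> + p x * cell_surprisal 1 0 x + wide_mass x"

lemma tail_dominant_integrable: "integrable lborel tail_dominant"
  unfolding tail_dominant_def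
  using entropy_integrable unit_surprisal_integrable wide_mass_integrable by auto

lemma tail_dominant_nonneg: "tail_dominant x \<ge> 0"
  unfolding tail_dominant_def
  using density_nonneg[of x] cell_surprisal_nonneg[of 1 0 x] wide_mass_nonneg[of x] by simp

lemma integral_outside_tail_dominant_le:
  assumes m: "m \<ge> 1"
  shows "(\<integral>x. (1 - centre_window m s R (cell m s x)) * tail_dominant x \<partial>lborel) \<le>
    (\<integral>x. indicator {x. \<bar>x\<bar> \<ge> R - 1/2} x * tail_dominant x \<partial>lborel)"
proof (rule integral_mono)
  show "integrable lborel (\<lambda>x. (1 - centre_window m s R (cell m s x)) * tail_dominant x)"
    using centre_window_nonneg centre_window_le_1
    by (intro integrable_mult_cell_weight[OF tail_dominant_integrable]) auto
  have "integrable lborel (\<lambda>x. tail_dominant x * indicator {x. \<bar>x\<bar> \<ge> R - 1/2} x)"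
    by (rule integrable_real_mult_indicator[OF _ tail_dominant_integrable]) measurable
  then show "integrable lborel (\<lambda>x. indicator {x. \<bar>x\<bar> \<ge> R - 1/2} x * tail_dominant x)"
    by (simp add: mult.commute)
  show "(1 - centre_window m s R (cell m s x)) * tail_dominant x \<le>
      indicator {x. \<bar>x\<bar> \<ge> R - 1/2} x * tail_dominant x" for x
    using abs_ge_if_not_centre_window[OF m, of s R x] centre_window_cases[of m s R "cell m s x"]
      tail_dominant_nonneg[of x]
    by (auto simp: indicator_def)
qed

lemma integral_outside_kl_density_le:
  assumes m: "m \<ge> 1"
  shows "(\<integral>x. (1 - centre_window m s R (cell m s x)) * kl_density m s x \<partial>lborel) \<le>
    (\<integral>x. indicator {x. \<bar>x\<bar> \<ge> R - 1/2} x * tail_dominant x \<partial>lborel)"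
proof -
  define W where "W k = 1 - centre_window m s R k" for k
  have W: "0 \<le> W k" "W k \<le> 1" for k
    unfolding W_def using centre_window_nonneg centre_window_le_1 by auto
  define H where "H x = \<bar>p x * ln (p x)\<bar> + p x * cell_surprisal 1 0 x" for x
  have H: "integrable lborel H"
    unfolding H_def using entropy_integrable unit_surprisal_integrable by auto
  have WH: "integrable lborel (\<lambda>x. W (cell m s x) * H x)"
    and Wwide: "integrable lborel (\<lambda>x. W (cell m s x) * wide_mass x)"
    using integrable_mult_cell_weight[of _ W, OF _ W] H wide_mass_integrable by auto
  note excess = gibbs_excess_bound[OF m, of W, OF W]
  have "AE x in lborel. W (cell m s x) * kl_density m s x \<le>
      W (cell m s x) * H x + W (cell m s x) * gibbs_excess m s x"
    using AE_surprisal_le_gibbs[OF m, of s]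
  proof eventually_elim
    case (elim x)
    then have "kl_density m s x \<le> H x + gibbs_excess m s x"
      unfolding kl_density_def H_def by linarith
    then show ?case
      using W[of "cell m s x"] by (simp add: distrib_left[symmetric] mult_left_mono)
  qed
  then have "(\<integral>x. W (cell m s x) * kl_density m s x \<partial>lborel) \<le>
      (\<integral>x. W (cell m s x) * H x + W (cell m s x) * gibbs_excess m s x \<partial>lborel)"
    using integrable_mult_cell_weight[OF kl_density_integrable[OF m] W] WH excess(1)
    by (intro integral_mono_AE) auto
  also have "\<dots> \<le> (\<integral>x. W (cell m s x) * H x \<partial>lborel) + (\<integral>x. W (cell m s x) * wide_mass x \<partial>lborel)"
    using WH excess by simp
  also have "\<dots> = (\<integral>x. W (cell m s x) * tail_dominant x \<partial>lborel)"
    using WH Wwide by (simp add: tail_dominant_def H_def distrib_left)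
  also have "\<dots> \<le> (\<integral>x. indicator {x. \<bar>x\<bar> \<ge> R - 1/2} x * tail_dominant x \<partial>lborel)"
    unfolding W_def by (rule integral_outside_tail_dominant_le[OF m])
  finally show ?thesis
    unfolding W_def .
qed

lemma integral_kl_density_le:
  assumes m: "m \<ge> 1" and \<delta>: "\<delta> > 0" and R: "R > 0"
  shows "integral\<^sup>L lborel (kl_density m s) \<le> integral\<^sup>L lborel (core_term m s R \<delta>) + \<delta> * (2 * R + 1) +
    (\<integral>x. indicator {x. \<bar>x\<bar> \<ge> R - 1/2} x * tail_dominant x \<partial>lborel)"
proof -
  let ?w = "\<lambda>x. centre_window m s R (cell m s x)"
  have "integral\<^sup>L lborel (kl_density m s) =
      (\<integral>x. ?w x * kl_density m s x + (1 - ?w x) * kl_density m s x \<partial>lborel)"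
    by (simp add: algebra_simps)
  also have "\<dots> = (\<integral>x. ?w x * kl_density m s x \<partial>lborel) + (\<integral>x. (1 - ?w x) * kl_density m s x \<partial>lborel)"
    using integrable_mult_cell_weight[OF kl_density_integrable[OF m], of "centre_window m s R"]
      integrable_mult_cell_weight[OF kl_density_integrable[OF m], of "\<lambda>k. 1 - centre_window m s R k"]
      centre_window_nonneg centre_window_le_1
    by (intro Bochner_Integration.integral_add) auto
  finally show ?thesis
    using integral_window_kl_density_le[OF assms, of s] integral_outside_kl_density_le[OF m, of s R]
    by linarith
qed

definition core_limit :: "real \<Rightarrow> real \<Rightarrow> real \<Rightarrow> real" where
  "core_limit R \<delta> x = indicator {x. \<bar>x\<bar> < R} x * (p x * (ln (p x) - ln (max (p x) \<delta>)))"

lemma core_limit_nonpos: "\<delta> > 0 \<Longrightarrow> core_limit R \<delta> x \<le> 0"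
  unfolding core_limit_def using density_nonneg[of x]
  by (cases "p x = 0") (auto simp: indicator_def mult_nonneg_nonpos)

lemma core_term_integral_tendsto:
  assumes \<delta>: "\<delta> > 0"
  shows "(\<lambda>n. integral\<^sup>L lborel (core_term (real n) (c n) R \<delta>)) \<longlonglongrightarrow> integral\<^sup>L lborel (core_limit R \<delta>)"
proof -
  have "(\<lambda>n. integral\<^sup>L lborel (core_term (real (Suc n)) (c (Suc n)) R \<delta>)) \<longlonglongrightarrow>
      integral\<^sup>L lborel (core_limit R \<delta>)"
  proof (rule integral_dominated_convergence[where w = "core_bound R \<delta>"])
    show "core_limit R \<delta> \<in> borel_measurable lborel"
      unfolding core_limit_def by measurable
    show "AE x in lborel. norm (core_term (real (Suc n)) (c (Suc n)) R \<delta> x) \<le> core_bound R \<delta> x" for n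
      using abs_core_term_le[of "real (Suc n)" \<delta>] \<delta> by simp
    have "AE x in lborel. x \<notin> {R, -R}"
      by (intro AE_not_in countable_imp_null_set_lborel) simp
    then show "AE x in lborel. (\<lambda>n. core_term (real (Suc n)) (c (Suc n)) R \<delta> x) \<longlonglongrightarrow> core_limit R \<delta> x"
      using density_AE_isCont
    proof eventually_elim
      case (elim x)
      then have "\<bar>x\<bar> \<noteq> R"
        by auto
      have "(\<lambda>n. core_term (real n) (c n) R \<delta> x) \<longlonglongrightarrow> core_limit R \<delta> x"
        unfolding core_term_def core_limit_def
        using \<delta> by (intro tendsto_intros centre_window_tendsto[OF \<open>\<bar>x\<bar> \<noteq> R\<close>]
            hist_density_tendsto[OF elim(2)]) auto
      then show ?case
        by (rule LIMSEQ_Suc)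
    qed
  qed (use core_bound_integrable in auto)
  then show ?thesis
    by (rule LIMSEQ_imp_Suc)
qed

lemma tail_dominant_integral_small:
  assumes "e > 0"
  obtains R where "R > 0" "(\<integral>x. indicator {x. \<bar>x\<bar> \<ge> R - 1/2} x * tail_dominant x \<partial>lborel) < e"
proof -
  define f where "f n x = indicator {x. \<bar>x\<bar> \<ge> real n - 1/2} x * tail_dominant x" for n x
  have "(\<lambda>n. integral\<^sup>L lborel (f n)) \<longlonglongrightarrow> integral\<^sup>L lborel (\<lambda>x::real. 0 :: real)"
  proof (rule integral_dominated_convergence[where w = tail_dominant])
    show "f n \<in> borel_measurable lborel" for n
      unfolding f_def using tail_dominant_integrable by measurable
    show "AE x in lborel. (\<lambda>n. f n x) \<longlonglongrightarrow> 0"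
    proof (rule AE_I2)
      fix x :: real
      obtain N :: nat where "\<bar>x\<bar> + 1 < real N"
        using reals_Archimedean2 by blast
      then have "eventually (\<lambda>n. f n x = 0) sequentially"
        unfolding eventually_sequentially f_def by (intro exI[of _ N]) (auto simp: indicator_def)
      then show "(\<lambda>n. f n x) \<longlonglongrightarrow> 0"
        by (rule tendsto_eventually)
    qed
    show "AE x in lborel. norm (f n x) \<le> tail_dominant x" for n
      using tail_dominant_nonneg by (auto simp: f_def indicator_def)
  qed (use tail_dominant_integrable in auto)
  then have "eventually (\<lambda>n. integral\<^sup>L lborel (f n) < e) sequentially"
    using assms by (intro order_tendstoD) auto
  then obtain N where N: "\<And>n. n \<ge> N \<Longrightarrow> integral\<^sup>L lborel (f n) < e"
    unfolding eventually_sequentially by blast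
  show ?thesis
    using that[of "real (Suc N)"] N[of "Suc N"] unfolding f_def by simp
qed

lemma integral_kl_density_tendsto_0: "(\<lambda>n. integral\<^sup>L lborel (kl_density (real n) (c n))) \<longlonglongrightarrow> 0"
proof (rule order_tendstoI)
  fix a :: real
  assume "a < 0"
  show "eventually (\<lambda>n. a < integral\<^sup>L lborel (kl_density (real n) (c n))) sequentially"
    using eventually_ge_at_top[of 1]
  proof eventually_elim
    case (elim n)
    then have "0 \<le> integral\<^sup>L lborel (kl_density (real n) (c n))"
      by (intro integral_kl_density_nonneg) simp
    then show ?case
      using \<open>a < 0\<close> by linarith
  qed
next
  fix a :: real
  assume a: "a > 0"
  obtain R where R: "R > 0" "(\<integral>x. indicator {x. \<bar>x\<bar> \<ge> R - 1/2} x * tail_dominant x \<partial>lborel) < a / 3"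
    using tail_dominant_integral_small[of "a / 3"] a by auto
  define \<delta> where "\<delta> = a / (3 * (2 * R + 1))"
  have \<delta>: "\<delta> > 0" "\<delta> * (2 * R + 1) = a / 3"
    unfolding \<delta>_def using a R by (simp_all add: field_simps)
  have "0 \<le> (\<integral>x. - core_limit R \<delta> x \<partial>lborel)"
    using core_limit_nonpos[OF \<delta>(1)] by (intro integral_nonneg_AE) auto
  then have "integral\<^sup>L lborel (core_limit R \<delta>) \<le> 0"
    by simp
  then have "eventually (\<lambda>n. integral\<^sup>L lborel (core_term (real n) (c n) R \<delta>) < a / 3) sequentially"
    using a by (intro order_tendstoD(2)[OF core_term_integral_tendsto[OF \<delta>(1)]]) auto
  with eventually_ge_at_top[of 1]
  show "eventually (\<lambda>n. integral\<^sup>L lborel (kl_density (real n) (c n)) < a) sequentially"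
  proof eventually_elim
    case (elim n)
    then show ?case
      using integral_kl_density_le[of "real n" \<delta> R "c n"] \<delta> R by simp
  qed
qed

end

theorem mainTheorem14:
  fixes M :: "'a measure" and X :: "'a \<Rightarrow> real" and p :: "real \<Rightarrow> real"
    and c :: "nat \<Rightarrow> real"
  assumes "prob_space M"
    and "\<And>x. p x \<ge> 0"
    and "distributed M lborel X (\<lambda>x. ennreal (p x))"
    and "piecewise_continuous p"
    and "disc_entropy_finite M (\<lambda>\<omega>. quant 1 (X \<omega>))"
    and "integrable lborel (\<lambda>x. p x * \<bar>ln (p x)\<bar>)"
    and "esssup lborel (\<lambda>x. ereal (p x)) < \<infinity>"
  shows "(\<lambda>m. disc_entropy M (\<lambda>\<omega>. quant (real m) (X \<omega> + c m)) - ln (real m))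
           \<longlonglongrightarrow> diff_entropy p"
proof -
  interpret quantized_density M X p
    using assms(1-3) by (intro quantized_density.intro quantized_density_axioms.intro)
  obtain L where L: "AE x in lborel. p x \<le> L"
    using AE_le_if_esssup_finite[OF assms(7)] .
  have "integrable lborel (\<lambda>x. p x * cell_surprisal 1 0 x)"
    using assms(5) disc_entropy_finite_quant_iff[of 1 0] by simp
  moreover have "integrable lborel (\<lambda>x. p x * ln (p x))"
    using assms(6) by (rule Bochner_Integration.integrable_bound) (auto simp: abs_mult assms(2))
  ultimately interpret quantized_density_regular M X p L
    using L AE_isCont_if_piecewise_continuous[OF assms(4)] by unfold_locales
  have "(\<lambda>m. integral\<^sup>L lborel (kl_density (real m) (c m)) + diff_entropy p) \<longlonglongrightarrow> diff_entropy p"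
    using tendsto_add[OF integral_kl_density_tendsto_0 tendsto_const] by simp
  moreover have "eventually (\<lambda>m. integral\<^sup>L lborel (kl_density (real m) (c m)) + diff_entropy p =
      disc_entropy M (\<lambda>\<omega>. quant (real m) (X \<omega> + c m)) - ln (real m)) sequentially"
    using eventually_ge_at_top[of 1] by eventually_elim (simp add: disc_entropy_quant_minus_ln)
  ultimately show ?thesis
    by (rule Lim_transform_eventually)
qed

end
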